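(* For the three calculi on $\mathbb F_2[e,x]$ given by the algebras (A) $x\circ x=0$, (B) $x\circ x=x$, (C) $x\circ x=e+x$ (basis $e,x$, $e$ the unit), the quantum metrics are exactly: (A) $g_{A.I}=\mathrm de\otimes\mathrm dx+\mathrm dx\otimes\mathrm de$ and $g_{A.II}=\mathrm de\otimes\mathrm dx+\mathrm dx\otimes\mathrm de+\mathrm dx\otimes\mathrm dx$; (B) $g_B=\mathrm de\otimes\mathrm de+\mathrm de\otimes\mathrm dx+\mathrm dx\otimes\mathrm de$; (C) $g_{C.I}=\mathrm de\otimes\mathrm dx+\mathrm dx\otimes\mathrm de+\mathrm dx\otimes\mathrm dx$, $g_{C.II}=\mathrm de\otimes\mathrm de+\mathrm de\otimes\mathrm dx+\mathrm dx\otimes\mathrm de$, $g_{C.III}=\mathrm de\otimes\mathrm de+\mathrm dx\otimes\mathrm dx$. Moreover, the quantum Levi-Civita connections with constant coefficients, besides the zero connection $\nabla\mathrm de=\nabla\mathrm dx=0$ (with $\sigma$ the flip on generators), are exactly: for $g_{A.I}$: (1) $\nabla\mathrm de=\mathrm dx\otimes\mathrm dx,\ \nabla\mathrm dx=0$; (2) $\nabla\mathrm de=\mathrm dx\otimes\mathrm de+\mathrm de\otimes\mathrm dx,\ \nabla\mathrm dx=\mathrm dx\otimes\mathrm dx$; (3) $\nabla\mathrm de=\mathrm dx\otimes\mathrm de+\mathrm de\otimes\mathrm dx+\mathrm dx\otimes\mathrm dx,\ \nabla\mathrm dx=\mathrm dx\otimes\mathrm dx$; (4) $\nabla\mathrm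 de=0,\ \nabla\mathrm dx=\mathrm de\otimes\mathrm de$; (5) $\nabla\mathrm de=\mathrm de\otimes\mathrm dx+\mathrm dx\otimes\mathrm de,\ \nabla\mathrm dx=\mathrm de\otimes\mathrm de+\mathrm dx\otimes\mathrm dx$; for $g_{A.II}$: the connections (1), (2), (3) above; for $g_B$: $\nabla\mathrm de=0,\ \nabla\mathrm dx=\mathrm de\otimes\mathrm de$; for $g_{C.I}$: $\nabla\mathrm de=\mathrm de\otimes\mathrm dx+\mathrm dx\otimes\mathrm de+\mathrm dx\otimes\mathrm dx,\ \nabla\mathrm dx=\mathrm dx\otimes\mathrm dx$; for $g_{C.II}$: $\nabla\mathrm de=0,\ \nabla\mathrm dx=\mathrm de\otimes\mathrm de$; for $g_{C.III}$: $\nabla\mathrm de=\mathrm de\otimes\mathrm de+\mathrm dx\otimes\mathrm dx,\ \nabla\mathrm dx=\mathrm de\otimes\mathrm dx+\mathrm dx\otimes\mathrm de$. In all cases the map $\alpha$ in the decomposition $\nabla\omega=\theta\otimes\omega-\sigma(\omega\otimes\theta)+\alpha\omega$, $\theta=\mathrm de$, is zero.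
   Context: Standing setup. Work over $\mathbb F_2$. Let $(V,\circ)$ be a commutative associative algebra over $\mathbb F_2$ with basis $x^1,\dots,x^n$ and structure constants $x^\mu\circ x^\nu=\sum_\rho V^{\mu\nu}{}_\rho x^\rho$. Let $A=\mathbb F_2[x^1,\dots,x^n]$ be the polynomial algebra on the same symbols. The associated differential calculus is the $A$-bimodule $\Omega^1$ which is free as a left $A$-module on $\mathrm dx^1,\dots,\mathrm dx^n$, with right action determined by $\mathrm dx^\mu\, x^\nu=x^\nu\,\mathrm dx^\mu+\sum_\rho V^{\mu\nu}{}_\rho\,\mathrm dx^\rho$, together with the unique map $\mathrm d:A\to\Omega^1$ satisfying the Leibniz rule $\mathrm d(ab)=(\mathrm da)b+a\,\mathrm db$, $\mathrm d(x^\mu)=\mathrm dx^\mu$, $\mathrm d1=0$. The bimodule $\Omega^1\otimes_A\Omega^1$ is free as a left module on $\mathrm dx^\mu\otimes\mathrm dx^\nu$. $\Omega^2$ is the quotient of $\Omega^1\otimes_A\Omega^1$ by the sub-bimodule generated by $\mathrm dx^\mu\otimes\mathrm dx^\mu$ and $\mathrm dx^\mu\otimes\mathrm dx^\nu+\mathrm dx^\nu\otimes \mathrm dx^\mu$; the quotient map is denoted $\wedge$, and $\mathrm d$ is extended to $\Omega^1$ by $\mathrm d(a\,\mathrm dx^\mu)=\mathrm da\wedge\mathrm dx^\mu$. A quantum metric is $g=\sum_{\mu,\nu}g_{\mu\nu}\mathrm dx^\mu\otimes\mathrm dx^\nu$ with constants $g_{\mu\nu}\in\mathbb F_2$, $g_{\mu\nu}=g_{\nu\mu}$,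 the matrix $(g_{\mu\nu})$ invertible, and $g$ central: $x^\rho g=g x^\rho$ for all $\rho$. A bimodule connection is a pair $(\nabla,\sigma)$ with $\nabla:\Omega^1\to\Omega^1\otimes_A\Omega^1$ additive, $\nabla(a\omega)=a\nabla\omega+\mathrm da\otimes\omega$, and $\sigma:\Omega^1\otimes_A\Omega^1\to\Omega^1\otimes_A\Omega^1$ a bimodule map with $\nabla(\omega a)=(\nabla\omega)a+\sigma(\omega\otimes\mathrm da)$. It has constant coefficients if $\nabla\mathrm dx^\mu=\sum\Gamma^\mu{}_{\nu\rho}\mathrm dx^\nu\otimes\mathrm dx^\rho$ with $\Gamma^\mu{}_{\nu\rho}\in\mathbb F_2$. A quantum Levi-Civita connection (QLC) for $g$ is a bimodule connection with $\sigma$ invertible, torsion free ($\wedge\nabla=\mathrm d$ on $\Omega^1$) and metric compatible ($(\nabla\otimes\mathrm{id})g+(\sigma\otimes\mathrm{id})(\mathrm{id}\otimes\nabla)g=0$). Its curvature is $R_\nabla=(\mathrm d\otimes\mathrm{id}-(\wedge\otimes\mathrm{id})(\mathrm{id}\otimes\nabla))\nabla:\Omega^1\to\Omega^2\otimes_A\Omega^1$. Here the basis is $x^1=e$, $x^2=x$. *)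

theory Defs
  imports Main "HOL-Library.Poly_Mapping" "HOL-Library.Z2"
begin

section \<open>Index set: the basis x^1 = e, x^2 = x of V\<close>

datatype idx = E | X

lemma UNIV_idx: "(UNIV :: idx set) = {E, X}"
  using idx.exhaust by auto

instance idx :: finite
  by standard (simp add: UNIV_idx)

text \<open>A monomial is a finitely supported
  exponent vector (finitely supported idx to nat); a polynomial is a finitely supported map from
  monomials to F_2 (the standard multivariate polynomial ring).\<close>

type_synonym poly2 = "(idx \<Rightarrow>\<^sub>0 nat) \<Rightarrow>\<^sub>0 bit"

definition Var :: "idx \<Rightarrow> poly2" where
  "Var i = Poly_Mapping.single (Poly_Mapping.single i 1) 1"

definition Const :: "bit \<Rightarrow> poly2" where
  "Const c = Poly_Mapping.single 0 c"

text \<open>Structure constants V mu nu rho: x^mu o x^nu = sum_rho V mu nu rho x^rho.\<close>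
type_synonym structc = "idx \<Rightarrow> idx \<Rightarrow> idx \<Rightarrow> bit"

text \<open>Elements of Omega^1 (free left module on dx^mu), of Omega^1 (x)_A Omega^1
  (free left module on dx^mu (x) dx^nu) and of the triple tensor product, given by
  their left coefficients.\<close>
type_synonym om1 = "idx \<Rightarrow> poly2"
type_synonym om2 = "idx \<Rightarrow> idx \<Rightarrow> poly2"
type_synonym om3 = "idx \<Rightarrow> idx \<Rightarrow> idx \<Rightarrow> poly2"

definition dxb :: "idx \<Rightarrow> om1" where
  "dxb mu = (\<lambda>a. if a = mu then 1 else 0)"

definition basis2 :: "idx \<Rightarrow> idx \<Rightarrow> om2" where
  "basis2 mu nu = (\<lambda>a b. if a = mu \<and> b = nu then 1 else 0)"

definition zero2 :: om2 where "zero2 = (\<lambda>a b. 0)"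

definition add1 :: "om1 \<Rightarrow> om1 \<Rightarrow> om1" where "add1 w u = (\<lambda>a. w a + u a)"
definition add2 :: "om2 \<Rightarrow> om2 \<Rightarrow> om2" where "add2 S T = (\<lambda>a b. S a b + T a b)"
definition sub2 :: "om2 \<Rightarrow> om2 \<Rightarrow> om2" where "sub2 S T = (\<lambda>a b. S a b - T a b)"
definition add3 :: "om3 \<Rightarrow> om3 \<Rightarrow> om3" where "add3 S T = (\<lambda>a b c. S a b c + T a b c)"

definition smul1 :: "poly2 \<Rightarrow> om1 \<Rightarrow> om1" where "smul1 p w = (\<lambda>a. p * w a)"
definition smul2 :: "poly2 \<Rightarrow> om2 \<Rightarrow> om2" where "smul2 p T = (\<lambda>a b. p * T a b)"

text \<open>Right action of a generator on Omega^1: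
  (sum_mu w_mu dx^mu) x^nu = sum_mu w_mu (x^nu dx^mu + sum_rho V^{mu nu}_rho dx^rho).\<close>
definition rgen1 :: "structc \<Rightarrow> idx \<Rightarrow> om1 \<Rightarrow> om1" where
  "rgen1 V nu w = (\<lambda>rho. Var nu * w rho + (\<Sum>mu\<in>UNIV. w mu * Const (V mu nu rho)))"

text \<open>Right action of an arbitrary polynomial: a monomial acts as the corresponding
  composite of generator actions, extended additively (constants of F_2 are central).\<close>
definition rmul1 :: "structc \<Rightarrow> poly2 \<Rightarrow> om1 \<Rightarrow> om1" where
  "rmul1 V p w = (\<lambda>rho. \<Sum>m :: idx \<Rightarrow>\<^sub>0 nat\<in>Poly_Mapping.keys p.
      Const (Poly_Mapping.lookup p m) * (((rgen1 V E ^^ Poly_Mapping.lookup m E) ((rgen1 V X ^^ Poly_Mapping.lookup m X) w)) rho))"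

text \<open>Tensor product over A of two 1-forms:
  w (x) (sum_b u_b dx^b) = sum_b (w u_b) (x) dx^b.\<close>
definition tens :: "structc \<Rightarrow> om1 \<Rightarrow> om1 \<Rightarrow> om2" where
  "tens V w u = (\<lambda>a b. rmul1 V (u b) w a)"

text \<open>Right action on Omega^1 (x)_A Omega^1:
  (sum_k T_{.k} (x) dx^k) p = sum_k T_{.k} (x) (dx^k p).\<close>
definition rmul2 :: "structc \<Rightarrow> poly2 \<Rightarrow> om2 \<Rightarrow> om2" where
  "rmul2 V p T = (\<lambda>a b. \<Sum>k\<in>UNIV. tens V (\<lambda>m. T m k) (rmul1 V p (dxb k)) a b)"

definition tens21 :: "structc \<Rightarrow> om2 \<Rightarrow> om1 \<Rightarrow> om3" where
  "tens21 V T u = (\<lambda>a b c. rmul2 V (u c) T a b)"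

definition tens12 :: "structc \<Rightarrow> om1 \<Rightarrow> om2 \<Rightarrow> om3" where
  "tens12 V w T = (\<lambda>a b c. rmul1 V (T b c) w a)"

definition is_d :: "structc \<Rightarrow> (poly2 \<Rightarrow> om1) \<Rightarrow> bool" where
  "is_d V D \<longleftrightarrow> (\<forall>p q. D (p + q) = add1 (D p) (D q))
     \<and> (\<forall>p q. D (p * q) = add1 (rmul1 V q (D p)) (smul1 p (D q)))
     \<and> (\<forall>mu. D (Var mu) = dxb mu) \<and> D 1 = (\<lambda>a. 0)"

definition dd :: "structc \<Rightarrow> poly2 \<Rightarrow> om1" where
  "dd V = (THE D. is_d V D)"

text \<open>d on Omega^1: d(sum_mu w_mu dx^mu) = sum_mu d w_mu \<and> dx^mu, represented
  in Omega^1 (x)_A Omega^1 before taking the quotient.\<close>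
definition dd1 :: "structc \<Rightarrow> om1 \<Rightarrow> om2" where
  "dd1 V w = (\<lambda>a b. \<Sum>mu\<in>UNIV. tens V (dd V (w mu)) (dxb mu) a b)"

text \<open>The sub-bimodule of Omega^1 (x)_A Omega^1 generated by dx^mu (x) dx^mu and
  dx^mu (x) dx^nu + dx^nu (x) dx^mu; \<and> is the quotient map by it.\<close>
inductive_set wedge_ker :: "structc \<Rightarrow> om2 set" for V where
  wk_zero: "zero2 \<in> wedge_ker V"
| wk_diag: "basis2 mu mu \<in> wedge_ker V"
| wk_sym: "add2 (basis2 mu nu) (basis2 nu mu) \<in> wedge_ker V"
| wk_add: "S \<in> wedge_ker V \<Longrightarrow> T \<in> wedge_ker V \<Longrightarrow> add2 S T \<in> wedge_ker V"
| wk_lmul: "T \<in> wedge_ker V \<Longrightarrow> smul2 p T \<in> wedge_ker V"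
| wk_rmul: "T \<in> wedge_ker V \<Longrightarrow> rmul2 V p T \<in> wedge_ker V"

definition metric_tensor :: "(idx \<Rightarrow> idx \<Rightarrow> bit) \<Rightarrow> om2" where
  "metric_tensor g = (\<lambda>a b. Const (g a b))"

definition invertible2 :: "(idx \<Rightarrow> idx \<Rightarrow> bit) \<Rightarrow> bool" where
  "invertible2 g \<longleftrightarrow> (\<exists>h. (\<forall>i j. (\<Sum>k\<in>UNIV. g i k * h k j) = (if i = j then 1 else 0))
                          \<and> (\<forall>i j. (\<Sum>k\<in>UNIV. h i k * g k j) = (if i = j then 1 else 0)))"

definition quantum_metric :: "structc \<Rightarrow> (idx \<Rightarrow> idx \<Rightarrow> bit) \<Rightarrow> bool" where
  "quantum_metric V g \<longleftrightarrow> (\<forall>i j. g i j = g j i) \<and> invertible2 g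
     \<and> (\<forall>rho. smul2 (Var rho) (metric_tensor g) = rmul2 V (Var rho) (metric_tensor g))"

definition bimodule_map2 :: "structc \<Rightarrow> (om2 \<Rightarrow> om2) \<Rightarrow> bool" where
  "bimodule_map2 V s \<longleftrightarrow> (\<forall>S T. s (add2 S T) = add2 (s S) (s T))
     \<and> (\<forall>p T. s (smul2 p T) = smul2 p (s T))
     \<and> (\<forall>p T. s (rmul2 V p T) = rmul2 V p (s T))"

definition bimod_conn :: "structc \<Rightarrow> (om1 \<Rightarrow> om2) \<Rightarrow> (om2 \<Rightarrow> om2) \<Rightarrow> bool" where
  "bimod_conn V nab s \<longleftrightarrow> (\<forall>w u. nab (add1 w u) = add2 (nab w) (nab u))
     \<and> (\<forall>p w. nab (smul1 p w) = add2 (smul2 p (nab w)) (tens V (dd V p) w))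
     \<and> bimodule_map2 V s
     \<and> (\<forall>w p. nab (rmul1 V p w) = add2 (rmul2 V p (nab w)) (s (tens V w (dd V p))))"

definition const_coeff :: "(om1 \<Rightarrow> om2) \<Rightarrow> bool" where
  "const_coeff nab \<longleftrightarrow> (\<forall>mu. \<exists>G :: idx \<Rightarrow> idx \<Rightarrow> bit. nab (dxb mu) = (\<lambda>a b. Const (G a b)))"

definition torsion_free :: "structc \<Rightarrow> (om1 \<Rightarrow> om2) \<Rightarrow> bool" where
  "torsion_free V nab \<longleftrightarrow> (\<forall>w. sub2 (nab w) (dd1 V w) \<in> wedge_ker V)"

text \<open>(sigma (x) id) applied to Phi = sum_c Phi_{..c} (x) dx^c.\<close>
definition sigma_id :: "structc \<Rightarrow> (om2 \<Rightarrow> om2) \<Rightarrow> om3 \<Rightarrow> om3" where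
  "sigma_id V s Phi = (\<lambda>a b c. \<Sum>k\<in>UNIV. tens21 V (s (\<lambda>i j. Phi i j k)) (dxb k) a b c)"

text \<open>(nabla (x) id) g + (sigma (x) id)(id (x) nabla) g = 0 for
  g = sum g_{mu nu} dx^mu (x) dx^nu.\<close>
definition metric_compat :: "structc \<Rightarrow> (idx \<Rightarrow> idx \<Rightarrow> bit) \<Rightarrow> (om1 \<Rightarrow> om2) \<Rightarrow> (om2 \<Rightarrow> om2) \<Rightarrow> bool" where
  "metric_compat V g nab s \<longleftrightarrow>
     (\<lambda>a b c. (\<Sum>mu\<in>UNIV. \<Sum>nu\<in>UNIV.
         tens21 V (nab (smul1 (Const (g mu nu)) (dxb mu))) (dxb nu) a b c)
       + sigma_id V s (\<lambda>i j k. \<Sum>mu\<in>UNIV. \<Sum>nu\<in>UNIV.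
         tens12 V (smul1 (Const (g mu nu)) (dxb mu)) (nab (dxb nu)) i j k) a b c)
     = (\<lambda>a b c. 0)"

definition QLC :: "structc \<Rightarrow> (idx \<Rightarrow> idx \<Rightarrow> bit) \<Rightarrow> (om1 \<Rightarrow> om2) \<Rightarrow> (om2 \<Rightarrow> om2) \<Rightarrow> bool" where
  "QLC V g nab s \<longleftrightarrow> bimod_conn V nab s \<and> bij s \<and> torsion_free V nab \<and> metric_compat V g nab s"

text \<open>e o e = e, e o x = x o e = x, and x o x = p e + q x.\<close>
definition Valg :: "bit \<Rightarrow> bit \<Rightarrow> structc" where
  "Valg p q mu nu rho =
     (if mu = E then (if rho = nu then 1 else 0)
      else if nu = E then (if rho = mu then 1 else 0)
      else (if rho = E then p else q))"

definition VA :: structc where "VA = Valg 0 0"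
definition VB :: structc where "VB = Valg 0 1"
definition VC :: structc where "VC = Valg 1 1"

definition mat2 :: "bit \<Rightarrow> bit \<Rightarrow> bit \<Rightarrow> bit \<Rightarrow> idx \<Rightarrow> idx \<Rightarrow> bit" where
  "mat2 ee ex xe xx i j = (case (i, j) of (E, E) \<Rightarrow> ee | (E, X) \<Rightarrow> ex | (X, E) \<Rightarrow> xe | (X, X) \<Rightarrow> xx)"

definition gAI   where "gAI   = mat2 0 1 1 0"
definition gAII  where "gAII  = mat2 0 1 1 1"
definition gB    where "gB    = mat2 1 1 1 0"
definition gCI   where "gCI   = mat2 0 1 1 1"
definition gCII  where "gCII  = mat2 1 1 1 0"
definition gCIII where "gCIII = mat2 1 0 0 1"

definition cten :: "bit \<Rightarrow> bit \<Rightarrow> bit \<Rightarrow> bit \<Rightarrow> om2" where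
  "cten ee ex xe xx = (\<lambda>a b. Const (mat2 ee ex xe xx a b))"

text \<open>Pairs (nabla de, nabla dx).\<close>
definition conn0 where "conn0 = (cten 0 0 0 0, cten 0 0 0 0)"
definition connA1 where "connA1 = (cten 0 0 0 1, cten 0 0 0 0)"
definition connA2 where "connA2 = (cten 0 1 1 0, cten 0 0 0 1)"
definition connA3 where "connA3 = (cten 0 1 1 1, cten 0 0 0 1)"
definition connA4 where "connA4 = (cten 0 0 0 0, cten 1 0 0 0)"
definition connA5 where "connA5 = (cten 0 1 1 0, cten 1 0 0 1)"
definition connB where "connB = (cten 0 0 0 0, cten 1 0 0 0)"
definition connCI where "connCI = (cten 0 1 1 1, cten 0 0 0 1)"
definition connCII where "connCII = (cten 0 0 0 0, cten 1 0 0 0)"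
definition connCIII where "connCIII = (cten 1 0 0 1, cten 0 1 1 0)"

text \<open>The cases: algebra, metric, list of QLCs with constant coefficients.\<close>
definition cases4 :: "(structc \<times> (idx \<Rightarrow> idx \<Rightarrow> bit) \<times> (om2 \<times> om2) set) set" where
  "cases4 = {(VA, gAI, {conn0, connA1, connA2, connA3, connA4, connA5}),
             (VA, gAII, {conn0, connA1, connA2, connA3}),
             (VB, gB, {conn0, connB}),
             (VC, gCI, {conn0, connCI}),
             (VC, gCII, {conn0, connCII}),
             (VC, gCIII, {conn0, connCIII})}"

end

theory Submission
  imports Defs
begin

text \<open>Since e is the unit of the algebra, \<theta> = de satisfies \<theta> r - r \<theta> = dr for every
  polynomial r, so the calculus is inner. Consequently every bimodule connection is
  \<nabla> \<omega> = \<theta> \<otimes> \<omega> - \<sigma>(\<omega> \<otimes> \<theta>), i.e. \<alpha> = 0, while conversely the right Leibniz rule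
  applied to dx^\<mu> e and dx^\<mu> x expresses \<sigma> on the basis through the Christoffel symbols
  of \<nabla>. For constant coefficients, torsion freeness says that these symbols are symmetric
  (in characteristic 2 the kernel of the wedge product consists of the symmetric tensors),
  and bimodularity and invertibility of \<sigma> and metric compatibility become finitely many
  equations over the two-element field in the six independent symbols. Likewise centrality
  and invertibility of a metric are equations in its four entries, so both classifications
  are finite enumerations.\<close>

text \<open>Keep bit arithmetic in ring form instead of rewriting it to xor/and.\<close>
declare add_bit_eq_xor[simp del] mult_bit_eq_and[simp del]

lemma sum_UNIV_idx: "(\<Sum>i\<in>UNIV. f i) = f E + f X"
  by (simp add: UNIV_idx)

lemma all_idx: "(\<forall>i::idx. P i) \<longleftrightarrow> P E \<and> P X"
  by (metis idx.exhaust)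

lemma bit_add_self [simp]: "(a::bit) + a = 0"
  by (cases a) simp_all

lemma poly2_add_self [simp]: "(a::poly2) + a = 0"
  by (rule poly_mapping_eqI) (simp only: lookup_add bit_add_self lookup_zero)

lemma poly2_two [simp]: "(2::poly2) = 0"
  by (metis one_add_one poly2_add_self)

lemma Const_0 [simp]: "Const 0 = 0"
  by (simp add: Const_def)

lemma Const_1 [simp]: "Const 1 = 1"
  by (simp add: Const_def)

lemma Const_add: "Const (a + b) = Const a + Const b"
  by (simp add: Const_def single_add)

lemma Const_mult: "Const (a * b) = Const a * Const b"
  by (simp add: Const_def mult_single)

lemma Const_eq_iff: "Const a = Const b \<longleftrightarrow> a = b"
  by (metis Const_def lookup_single_eq)

lemma Const_eq_0_iff: "Const a = 0 \<longleftrightarrow> a = 0"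
  using Const_eq_iff[of a 0] by simp

lemma update_eq_add_single:
  "k \<notin> Poly_Mapping.keys f \<Longrightarrow> Poly_Mapping.update k v f = f + Poly_Mapping.single k v"
  by (rule poly_mapping_eqI) (auto simp: lookup_update lookup_add lookup_single in_keys_iff when_def)

lemma poly_mapping_add_single_induct [case_names zero add_single]:
  assumes "P 0" and "\<And>f a b. P f \<Longrightarrow> P (f + Poly_Mapping.single a b)"
  shows "P p"
  by (induction p rule: update_induct) (auto simp: update_eq_add_single assms)

lemma Var_power: "Var i ^ n = Poly_Mapping.single (Poly_Mapping.single i n) 1"
proof (induction n)
  case (Suc n)
  have "Poly_Mapping.single i (Suc n) = Poly_Mapping.single i 1 + Poly_Mapping.single i n"
    by (simp add: single_add[symmetric])
  with Suc show ?case
    by (simp add: Var_def mult_single)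
qed simp

lemma single_eq_Const_monomial:
  "Poly_Mapping.single m c
     = Const c * (Var E ^ Poly_Mapping.lookup m E * Var X ^ Poly_Mapping.lookup m X)"
proof -
  have "Poly_Mapping.single E (Poly_Mapping.lookup m E) + Poly_Mapping.single X (Poly_Mapping.lookup m X) = m"
    by (rule poly_mapping_eqI) (case_tac k, simp_all add: lookup_add lookup_single)
  then show ?thesis
    by (simp add: Var_power mult_single Const_def)
qed

lemma poly2_induct [case_names Const Var add mult]:
  assumes Const: "\<And>c. P (Const c)" and Var: "\<And>i. P (Var i)"
    and add: "\<And>p q. P p \<Longrightarrow> P q \<Longrightarrow> P (p + q)"
    and mult: "\<And>p q. P p \<Longrightarrow> P q \<Longrightarrow> P (p * q)"
  shows "P p"
proof -
  have power: "P (Var i ^ n)" for i n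
    using Const[of 1] by (induction n) (simp_all add: mult Var)
  show ?thesis
  proof (induction p rule: poly_mapping_add_single_induct)
    case zero
    show ?case using Const[of 0] by simp
  next
    case (add_single f m c)
    then show ?case by (simp add: add single_eq_Const_monomial mult Const power)
  qed
qed

definition left_linear1 :: "(om1 \<Rightarrow> om1) \<Rightarrow> bool" where
  "left_linear1 f \<longleftrightarrow> (\<forall>w u. f (add1 w u) = add1 (f w) (f u)) \<and> (\<forall>c w. f (smul1 c w) = smul1 c (f w))"

lemma left_linear1_rgen1: "left_linear1 (rgen1 V nu)"
  unfolding left_linear1_def rgen1_def add1_def smul1_def sum_UNIV_idx
  by (auto simp: algebra_simps fun_eq_iff)

lemma left_linear1_comp: "left_linear1 f \<Longrightarrow> left_linear1 g \<Longrightarrow> left_linear1 (f \<circ> g)"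
  by (simp add: left_linear1_def)

lemma left_linear1_funpow: "left_linear1 f \<Longrightarrow> left_linear1 (f ^^ n)"
  by (induction n) (simp_all add: left_linear1_comp, simp add: left_linear1_def)

lemma funpow_commute: "(\<And>x. f (g x) = g (f x)) \<Longrightarrow> (f ^^ n) (g x) = g ((f ^^ n) x)"
  by (induction n) simp_all

lemma funpow_funpow_commute:
  assumes "\<And>x. f (g x) = g (f x)"
  shows "(f ^^ n) ((g ^^ m) x) = (g ^^ m) ((f ^^ n) x)"
proof (induction m arbitrary: x)
  case (Suc m)
  have "(f ^^ n) ((g ^^ Suc m) x) = (f ^^ n) (g ((g ^^ m) x))"
    by simp
  also have "\<dots> = g ((f ^^ n) ((g ^^ m) x))"
    by (rule funpow_commute[of f g, OF assms])
  also have "\<dots> = g ((g ^^ m) ((f ^^ n) x))"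
    using Suc by simp
  finally show ?case
    by simp
qed simp

lemma rgen1_E: "rgen1 (Valg p q) E w = add1 (smul1 (Var E) w) w"
  unfolding rgen1_def add1_def smul1_def sum_UNIV_idx Valg_def Const_def
  by (auto simp: fun_eq_iff) (metis idx.exhaust)+

definition xcomm1 :: "bit \<Rightarrow> bit \<Rightarrow> om1 \<Rightarrow> om1" where
  "xcomm1 p q w = (\<lambda>r. (if r = X then w E else 0) + w X * Const (if r = E then p else q))"

lemma rgen1_X: "rgen1 (Valg p q) X w = add1 (smul1 (Var X) w) (xcomm1 p q w)"
  by (rule ext, case_tac x) (simp_all add: rgen1_def sum_UNIV_idx Valg_def add1_def smul1_def xcomm1_def)

lemma rgen1_commute:
  "rgen1 (Valg p q) E (rgen1 (Valg p q) X w) = rgen1 (Valg p q) X (rgen1 (Valg p q) E w)"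
  using left_linear1_rgen1[of "Valg p q" X] by (simp add: rgen1_E left_linear1_def)

definition rmul_monomial :: "structc \<Rightarrow> (idx \<Rightarrow>\<^sub>0 nat) \<Rightarrow> om1 \<Rightarrow> om1" where
  "rmul_monomial V m =
     (rgen1 V E ^^ Poly_Mapping.lookup m E) \<circ> (rgen1 V X ^^ Poly_Mapping.lookup m X)"

lemma left_linear1_rmul_monomial: "left_linear1 (rmul_monomial V m)"
  by (simp add: rmul_monomial_def left_linear1_comp left_linear1_funpow left_linear1_rgen1)

lemma rmul_monomial_add:
  "rmul_monomial (Valg p q) (m + n) = rmul_monomial (Valg p q) m \<circ> rmul_monomial (Valg p q) n"
  by (simp add: rmul_monomial_def lookup_add funpow_add fun_eq_iff
      funpow_funpow_commute[of "rgen1 (Valg p q) E" "rgen1 (Valg p q) X", OF rgen1_commute])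

lemma rmul1_eq_sum:
  assumes "finite S" "Poly_Mapping.keys p \<subseteq> S"
  shows "rmul1 V p w = (\<lambda>r. \<Sum>m\<in>S. Const (Poly_Mapping.lookup p m) * rmul_monomial V m w r)"
  unfolding rmul1_def
proof (rule ext, rule sum.mono_neutral_cong_left[OF assms])
  fix r
  show "\<forall>m\<in>S - Poly_Mapping.keys p. Const (Poly_Mapping.lookup p m) * rmul_monomial V m w r = 0"
    by (simp add: in_keys_iff)
qed (simp add: rmul_monomial_def)

lemma rmul1_add_poly: "rmul1 V (p + q) w = add1 (rmul1 V p w) (rmul1 V q w)"
proof -
  let ?S = "Poly_Mapping.keys p \<union> Poly_Mapping.keys q"
  have "Poly_Mapping.keys (p + q) \<subseteq> ?S" by (rule keys_add)
  then show ?thesis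
    by (simp add: rmul1_eq_sum[of ?S] lookup_add Const_add add1_def algebra_simps sum.distrib)
qed

lemma rmul1_zero_poly: "rmul1 V 0 w = (\<lambda>_. 0)"
  by (simp add: rmul1_def)

lemma rmul1_single: "rmul1 V (Poly_Mapping.single m c) w = smul1 (Const c) (rmul_monomial V m w)"
  by (subst rmul1_eq_sum[of "{m}"]) (auto simp: smul1_def)

lemma left_linear1_rmul1: "left_linear1 (rmul1 V p)"
proof -
  have "rmul_monomial V m (add1 w u) = add1 (rmul_monomial V m w) (rmul_monomial V m u)"
    and "rmul_monomial V m (smul1 c w) = smul1 c (rmul_monomial V m w)" for m w u c
    using left_linear1_rmul_monomial[of V m] by (simp_all add: left_linear1_def)
  then show ?thesis
    by (simp add: left_linear1_def rmul1_eq_sum[OF finite_keys subset_refl] fun_eq_iff add1_def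
        smul1_def algebra_simps sum.distrib sum_distrib_left)
qed

lemma rmul1_add1: "rmul1 V p (add1 w u) = add1 (rmul1 V p w) (rmul1 V p u)"
  using left_linear1_rmul1 by (simp add: left_linear1_def)

lemma rmul1_smul1: "rmul1 V p (smul1 c w) = smul1 c (rmul1 V p w)"
  using left_linear1_rmul1 by (simp add: left_linear1_def)

lemma rmul1_zero_form: "rmul1 V p (\<lambda>_. 0) = (\<lambda>_. 0)"
  using rmul1_smul1[of V p 0 "\<lambda>_. 0"] by (simp add: smul1_def)

lemma rmul1_mult_single:
  "rmul1 (Valg p q) (Poly_Mapping.single m c * r) w
     = rmul1 (Valg p q) r (rmul1 (Valg p q) (Poly_Mapping.single m c) w)"
proof (induction r rule: poly_mapping_add_single_induct)
  case zero
  then show ?case by (simp add: rmul1_zero_poly)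
next
  case (add_single f n d)
  let ?V = "Valg p q"
  have homogeneous: "rmul_monomial ?V k (smul1 a u) = smul1 a (rmul_monomial ?V k u)" for k a u
    using left_linear1_rmul_monomial by (simp add: left_linear1_def)
  have "rmul1 ?V (Poly_Mapping.single n d) (rmul1 ?V (Poly_Mapping.single m c) w)
      = smul1 (Const d) (rmul_monomial ?V n (smul1 (Const c) (rmul_monomial ?V m w)))"
    by (simp add: rmul1_single)
  also have "\<dots> = smul1 (Const (c * d)) (rmul_monomial ?V (n + m) w)"
    by (simp only: homogeneous rmul_monomial_add comp_apply) (simp add: smul1_def Const_mult mult_ac)
  also have "\<dots> = rmul1 ?V (Poly_Mapping.single (m + n) (c * d)) w"
    by (simp add: rmul1_single add.commute)
  finally have "rmul1 ?V (Poly_Mapping.single n d) (rmul1 ?V (Poly_Mapping.single m c) w)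
      = rmul1 ?V (Poly_Mapping.single (m + n) (c * d)) w" .
  then show ?case
    by (simp add: distrib_left rmul1_add_poly add_single mult_single)
qed

lemma rmul1_mult: "rmul1 (Valg p q) (r * s) w = rmul1 (Valg p q) s (rmul1 (Valg p q) r w)"
proof (induction r arbitrary: w rule: poly_mapping_add_single_induct)
  case zero
  then show ?case by (simp add: rmul1_zero_poly rmul1_zero_form)
next
  case (add_single f m c)
  then show ?case
    by (simp add: distrib_right rmul1_add_poly rmul1_mult_single rmul1_add1)
qed

lemma rmul1_Const: "rmul1 V (Const c) w = smul1 (Const c) w"
  using rmul1_single[of V 0 c w] by (simp add: Const_def rmul_monomial_def)

lemma rmul1_one: "rmul1 V 1 w = w"
  using rmul1_Const[of V 1 w] by (simp add: smul1_def)

lemma rmul1_Var: "rmul1 V (Var i) w = rgen1 V i w"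
  unfolding Var_def rmul1_single
  by (cases i) (simp_all add: rmul_monomial_def lookup_single smul1_def)

section \<open>The exterior derivative is inner\<close>

text \<open>In characteristic 2, [\<theta>, r] = \<theta> r - r \<theta> = \<theta> r + r \<theta> with \<theta> = de.\<close>
definition inner_d :: "structc \<Rightarrow> poly2 \<Rightarrow> om1" where
  "inner_d V r = add1 (rmul1 V r (dxb E)) (smul1 r (dxb E))"

lemma is_d_inner_d: "is_d (Valg p q) (inner_d (Valg p q))"
  unfolding is_d_def
proof (intro conjI allI)
  fix r s
  show "inner_d (Valg p q) (r + s) = add1 (inner_d (Valg p q) r) (inner_d (Valg p q) s)"
    by (simp add: inner_d_def rmul1_add_poly add1_def smul1_def fun_eq_iff algebra_simps)
  show "inner_d (Valg p q) (r * s)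
      = add1 (rmul1 (Valg p q) s (inner_d (Valg p q) r)) (smul1 r (inner_d (Valg p q) s))"
    unfolding inner_d_def rmul1_mult rmul1_add1 rmul1_smul1
    by (simp add: add1_def smul1_def fun_eq_iff algebra_simps)
next
  fix mu
  show "inner_d (Valg p q) (Var mu) = dxb mu"
    by (simp add: inner_d_def rmul1_Var rgen1_def add1_def smul1_def fun_eq_iff sum_UNIV_idx dxb_def Valg_def)
next
  show "inner_d (Valg p q) 1 = (\<lambda>a. 0)"
    by (simp add: inner_d_def rmul1_one add1_def smul1_def)
qed

lemma is_d_zero:
  assumes "is_d V D"
  shows "D 0 = (\<lambda>_. 0)"
proof -
  have "D 0 = add1 (D 0) (D 0)"
    using assms by (metis add_0 is_d_def)
  then show ?thesis
    by (simp add: add1_def fun_eq_iff)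
qed

lemma is_d_unique: "is_d V D1 \<Longrightarrow> is_d V D2 \<Longrightarrow> D1 r = D2 r"
proof (induction r rule: poly2_induct)
  case (Const c)
  then show ?case using is_d_zero[OF Const(1)] is_d_zero[OF Const(2)]
    by (cases c) (simp_all add: is_d_def)
qed (simp_all add: is_d_def)

lemma dd_Valg: "dd (Valg p q) = inner_d (Valg p q)"
  unfolding dd_def
  by (rule the_equality[of "is_d (Valg p q)", OF is_d_inner_d]) (rule ext, rule is_d_unique[OF _ is_d_inner_d])

lemma dd_Const [simp]: "dd (Valg p q) (Const c) = (\<lambda>_. 0)"
  using is_d_inner_d[of p q] is_d_zero[OF is_d_inner_d[of p q]]
  by (cases c) (simp_all add: is_d_def dd_Valg)

lemma dd_Var [simp]: "dd (Valg p q) (Var i) = dxb i"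
  using is_d_inner_d[of p q] by (simp add: is_d_def dd_Valg)

lemma rmul1_theta: "rmul1 (Valg p q) r (dxb E) = add1 (smul1 r (dxb E)) (dd (Valg p q) r)"
  by (simp add: dd_Valg inner_d_def add1_def fun_eq_iff)

lemma tens_dxb: "tens V w (dxb k) = (\<lambda>a b. if b = k then w a else 0)"
  by (auto simp: tens_def dxb_def fun_eq_iff rmul1_one rmul1_zero_poly)

lemma basis2_eq_tens: "basis2 i j = tens V (dxb i) (dxb j)"
  unfolding tens_dxb by (auto simp: basis2_def dxb_def fun_eq_iff)

lemma tens_add1_left: "tens V (add1 w u) v = add2 (tens V w v) (tens V u v)"
  unfolding tens_def add2_def rmul1_add1 by (simp add: add1_def)

lemma tens_add1_right: "tens V w (add1 u v) = add2 (tens V w u) (tens V w v)"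
  by (simp add: tens_def add2_def rmul1_add_poly add1_def)

lemma tens_smul1_left: "tens V (smul1 c w) u = smul2 c (tens V w u)"
  unfolding tens_def smul2_def rmul1_smul1 by (simp add: smul1_def)

lemma tens_balanced: "tens (Valg p q) w (smul1 c u) = tens (Valg p q) (rmul1 (Valg p q) c w) u"
  by (simp add: tens_def smul1_def rmul1_mult)

lemma tens_zero_left: "tens V (\<lambda>_. 0) u = zero2"
  by (simp add: tens_def zero2_def rmul1_zero_form)

lemma om1_decomp: "u = add1 (smul1 (u E) (dxb E)) (smul1 (u X) (dxb X))"
  by (rule ext, case_tac x) (simp_all add: add1_def smul1_def dxb_def)

lemma om2_decomp: "T = add2 (tens V (\<lambda>a. T a E) (dxb E)) (tens V (\<lambda>a. T a X) (dxb X))"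
  by (rule ext, rule ext, case_tac xa) (simp_all add: add2_def tens_dxb)

lemma om2_basis_decomp:
  "T = add2 (add2 (smul2 (T E E) (basis2 E E)) (smul2 (T E X) (basis2 E X)))
            (add2 (smul2 (T X E) (basis2 X E)) (smul2 (T X X) (basis2 X X)))"
  by (rule ext, rule ext, case_tac x; case_tac xa) (simp_all add: add2_def smul2_def basis2_def)

lemma rmul2_expand:
  "rmul2 V r T = add2 (tens V (\<lambda>a. T a E) (rmul1 V r (dxb E))) (tens V (\<lambda>a. T a X) (rmul1 V r (dxb X)))"
  by (simp add: rmul2_def sum_UNIV_idx add2_def)

lemma tens_rmul1: "tens (Valg p q) w (rmul1 (Valg p q) r u) = rmul2 (Valg p q) r (tens (Valg p q) w u)"
proof -
  let ?V = "Valg p q"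
  have "tens ?V w (rmul1 ?V r u)
      = tens ?V w (add1 (smul1 (u E) (rmul1 ?V r (dxb E))) (smul1 (u X) (rmul1 ?V r (dxb X))))"
    by (subst om1_decomp[of u]) (simp add: rmul1_add1 rmul1_smul1)
  also have "\<dots> = add2 (tens ?V (rmul1 ?V (u E) w) (rmul1 ?V r (dxb E)))
                      (tens ?V (rmul1 ?V (u X) w) (rmul1 ?V r (dxb X)))"
    by (simp add: tens_add1_right tens_balanced)
  also have "\<dots> = rmul2 ?V r (tens ?V w u)"
    by (simp add: rmul2_expand tens_def)
  finally show ?thesis .
qed

lemma rmul2_add2: "rmul2 V r (add2 S T) = add2 (rmul2 V r S) (rmul2 V r T)"
proof -
  have "(\<lambda>a. add2 S T a k) = add1 (\<lambda>a. S a k) (\<lambda>a. T a k)" for k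
    by (simp add: add2_def add1_def)
  then show ?thesis
    by (simp add: rmul2_expand tens_add1_left) (simp add: add2_def algebra_simps)
qed

lemma rmul2_add_poly: "rmul2 V (r + s) T = add2 (rmul2 V r T) (rmul2 V s T)"
  by (simp add: rmul2_expand rmul1_add_poly tens_add1_right) (simp add: add2_def algebra_simps)

lemma rmul2_mult: "rmul2 (Valg p q) (r * s) T = rmul2 (Valg p q) s (rmul2 (Valg p q) r T)"
  by (simp add: rmul2_expand[of _ "r * s"] rmul2_expand[of _ r] rmul2_add2 tens_rmul1[symmetric] rmul1_mult)

lemma rmul2_Const: "rmul2 (Valg p q) (Const c) T = smul2 (Const c) T"
proof -
  have "rmul2 (Valg p q) (Const c) T
      = add2 (smul2 (Const c) (tens (Valg p q) (\<lambda>a. T a E) (dxb E)))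
             (smul2 (Const c) (tens (Valg p q) (\<lambda>a. T a X) (dxb X)))"
    by (simp add: rmul2_expand rmul1_Const tens_balanced tens_smul1_left)
  also have "\<dots> = smul2 (Const c) T"
    by (subst (3) om2_decomp[of T "Valg p q"]) (simp add: smul2_def add2_def algebra_simps)
  finally show ?thesis .
qed

lemma rmul2_one: "rmul2 (Valg p q) 1 T = T"
  using rmul2_Const[of p q 1 T] by (simp add: smul2_def)

lemma rmul2_zero_poly: "rmul2 (Valg p q) 0 T = zero2"
  using rmul2_Const[of p q 0 T] by (simp add: smul2_def zero2_def)

definition xcomm2 :: "bit \<Rightarrow> bit \<Rightarrow> om2 \<Rightarrow> om2" where
  "xcomm2 p q T = (\<lambda>a b. (if a = X then T E b else 0) + T X b * Const (if a = E then p else q)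
       + (if b = X then T a E else 0) + T a X * Const (if b = E then p else q))"

lemma rmul2_Var_E: "rmul2 (Valg p q) (Var E) T = smul2 (Var E) T"
  by (rule ext, rule ext, case_tac x; case_tac xa)
    (simp_all add: rmul2_expand rmul1_Var rgen1_E tens_def add2_def smul2_def add1_def smul1_def
      dxb_def rmul1_add_poly rmul1_mult rmul1_one rmul1_zero_poly algebra_simps)

lemma rmul2_Var_X: "rmul2 (Valg p q) (Var X) T = add2 (smul2 (Var X) T) (xcomm2 p q T)"
  by (rule ext, rule ext, case_tac x; case_tac xa)
    (simp_all add: rmul2_expand rmul1_Var rgen1_X xcomm1_def xcomm2_def tens_def add2_def smul2_def
      add1_def smul1_def dxb_def rmul1_add_poly rmul1_mult rmul1_one rmul1_zero_poly rmul1_Const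
      algebra_simps)

lemma tens21_dxb: "tens21 (Valg p q) T (dxb k) = (\<lambda>a b c. if c = k then T a b else 0)"
  by (simp add: tens21_def dxb_def rmul2_one rmul2_zero_poly zero2_def fun_eq_iff)

section \<open>Bimodule connections are inner\<close>

lemma sub2_eq_add2: "sub2 = add2"
  by (simp add: sub2_def add2_def fun_eq_iff)

lemma add2_cancel_common:
  assumes "add2 (add2 A B) C = add2 (add2 A K) Y"
  shows "Y = add2 (add2 B C) K"
proof (rule ext, rule ext)
  fix a b
  have "A a b + B a b + C a b = A a b + K a b + Y a b"
    using assms by (simp add: add2_def fun_eq_iff)
  then have "Y a b = (A a b + B a b + C a b) + (A a b + K a b)"
    by (simp add: add_ac)
  then show "Y a b = add2 (add2 B C) K a b"
    by (simp add: add2_def add_ac)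
qed

lemma bimodule_map2_add: "bimodule_map2 V s \<Longrightarrow> s (add2 S T) = add2 (s S) (s T)"
  by (simp add: bimodule_map2_def)

lemma bimodule_map2_smul2: "bimodule_map2 V s \<Longrightarrow> s (smul2 c T) = smul2 c (s T)"
  by (simp add: bimodule_map2_def)

lemma bimodule_map2_rmul2: "bimodule_map2 V s \<Longrightarrow> s (rmul2 V c T) = rmul2 V c (s T)"
  by (simp add: bimodule_map2_def)

lemma bimod_conn_add: "bimod_conn V nab s \<Longrightarrow> nab (add1 w u) = add2 (nab w) (nab u)"
  by (simp add: bimod_conn_def)

lemma bimod_conn_left: "bimod_conn V nab s \<Longrightarrow> nab (smul1 r w) = add2 (smul2 r (nab w)) (tens V (dd V r) w)"
  by (simp add: bimod_conn_def)

lemma bimod_conn_right: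
  "bimod_conn V nab s \<Longrightarrow> nab (rmul1 V r w) = add2 (rmul2 V r (nab w)) (s (tens V w (dd V r)))"
  by (simp add: bimod_conn_def)

lemma bimod_conn_bimodule_map2: "bimod_conn V nab s \<Longrightarrow> bimodule_map2 V s"
  by (simp add: bimod_conn_def)

lemma left_connection_expand:
  assumes "\<And>w u. f (add1 w u) = add2 (f w) (f u)"
    and "\<And>r w. f (smul1 r w) = add2 (smul2 r (f w)) (tens V (dd V r) w)"
  shows "f w = add2 (add2 (smul2 (w E) (f (dxb E))) (tens V (dd V (w E)) (dxb E)))
                    (add2 (smul2 (w X) (f (dxb X))) (tens V (dd V (w X)) (dxb X)))"
  by (subst om1_decomp[of w]) (simp only: assms)

lemma bimod_conn_expand:
  "bimod_conn V nab s \<Longrightarrow>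
     nab w = add2 (add2 (smul2 (w E) (nab (dxb E))) (tens V (dd V (w E)) (dxb E)))
                  (add2 (smul2 (w X) (nab (dxb X))) (tens V (dd V (w X)) (dxb X)))"
  by (rule left_connection_expand) (simp_all add: bimod_conn_add bimod_conn_left)

definition inner_conn :: "structc \<Rightarrow> (om2 \<Rightarrow> om2) \<Rightarrow> om1 \<Rightarrow> om2" where
  "inner_conn V s w = sub2 (tens V (dxb E) w) (s (tens V w (dxb E)))"

lemma inner_conn_add:
  "bimodule_map2 V s \<Longrightarrow> inner_conn V s (add1 w u) = add2 (inner_conn V s w) (inner_conn V s u)"
  by (simp add: inner_conn_def tens_add1_right tens_add1_left bimodule_map2_add sub2_eq_add2)
    (simp add: add2_def algebra_simps)

lemma inner_conn_left:
  "bimodule_map2 (Valg p q) s \<Longrightarrow>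
     inner_conn (Valg p q) s (smul1 r w)
       = add2 (smul2 r (inner_conn (Valg p q) s w)) (tens (Valg p q) (dd (Valg p q) r) w)"
  by (simp add: inner_conn_def tens_balanced tens_smul1_left rmul1_theta tens_add1_left
      bimodule_map2_smul2 sub2_eq_add2) (simp add: add2_def smul2_def algebra_simps)

lemma inner_conn_right:
  assumes s: "bimodule_map2 (Valg p q) s"
  shows "inner_conn (Valg p q) s (rmul1 (Valg p q) r w)
       = add2 (rmul2 (Valg p q) r (inner_conn (Valg p q) s w)) (s (tens (Valg p q) w (dd (Valg p q) r)))"
proof -
  let ?V = "Valg p q"
  have "smul1 r (dxb E) = add1 (rmul1 ?V r (dxb E)) (dd ?V r)"
    by (simp add: rmul1_theta add1_def fun_eq_iff)
  then have "tens ?V (rmul1 ?V r w) (dxb E) = add2 (rmul2 ?V r (tens ?V w (dxb E))) (tens ?V w (dd ?V r))"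
    by (simp only: tens_balanced[symmetric] tens_add1_right tens_rmul1)
  then show ?thesis
    using s unfolding inner_conn_def
    by (simp add: bimodule_map2_add bimodule_map2_rmul2 tens_rmul1 sub2_eq_add2 rmul2_add2)
      (simp add: add2_def algebra_simps)
qed

lemma inner_conn_bimod_conn:
  "bimodule_map2 (Valg p q) s \<Longrightarrow> bimod_conn (Valg p q) (inner_conn (Valg p q) s) s"
  by (simp add: bimod_conn_def inner_conn_add inner_conn_left inner_conn_right)

lemma inner_conn_dxb:
  "bimodule_map2 V s \<Longrightarrow> inner_conn V s (dxb mu) = add2 (basis2 E mu) (s (basis2 mu E))"
  by (simp add: inner_conn_def basis2_eq_tens[symmetric] sub2_eq_add2)

text \<open>The right Leibniz rule for dx^\<mu> e and dx^\<mu> x determines \<sigma> on the basis.\<close>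

lemma sigma_basis_E:
  assumes c: "bimod_conn (Valg p q) nab s"
  shows "s (basis2 mu E) = add2 (basis2 E mu) (nab (dxb mu))"
proof -
  let ?V = "Valg p q"
  have "rmul1 ?V (Var E) (dxb mu) = add1 (smul1 (Var E) (dxb mu)) (dxb mu)"
    by (simp add: rmul1_Var rgen1_E)
  with bimod_conn_right[OF c, of "Var E" "dxb mu"]
  have "add2 (add2 (smul2 (Var E) (nab (dxb mu))) (basis2 E mu)) (nab (dxb mu))
      = add2 (add2 (smul2 (Var E) (nab (dxb mu))) zero2) (s (basis2 mu E))"
    by (simp add: bimod_conn_add[OF c] bimod_conn_left[OF c] rmul2_Var_E basis2_eq_tens[symmetric])
      (simp add: add2_def zero2_def)
  then show ?thesis
    by (drule_tac add2_cancel_common) (simp add: add2_def zero2_def)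
qed

lemma sigma_basis_X:
  assumes c: "bimod_conn (Valg p q) nab s"
  shows "s (basis2 mu X) = add2 (add2 (basis2 X mu) (nab (xcomm1 p q (dxb mu)))) (xcomm2 p q (nab (dxb mu)))"
proof -
  let ?V = "Valg p q"
  have "rmul1 ?V (Var X) (dxb mu) = add1 (smul1 (Var X) (dxb mu)) (xcomm1 p q (dxb mu))"
    by (simp add: rmul1_Var rgen1_X)
  with bimod_conn_right[OF c, of "Var X" "dxb mu"]
  have "add2 (add2 (smul2 (Var X) (nab (dxb mu))) (basis2 X mu)) (nab (xcomm1 p q (dxb mu)))
      = add2 (add2 (smul2 (Var X) (nab (dxb mu))) (xcomm2 p q (nab (dxb mu)))) (s (basis2 mu X))"
    by (simp add: bimod_conn_add[OF c] bimod_conn_left[OF c] rmul2_Var_X basis2_eq_tens[symmetric])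
  then show ?thesis
    by (rule add2_cancel_common)
qed

lemma bimod_conn_eq_inner_conn:
  assumes c: "bimod_conn (Valg p q) nab s"
  shows "nab w = inner_conn (Valg p q) s w"
proof -
  have s: "bimodule_map2 (Valg p q) s"
    by (rule bimod_conn_bimodule_map2[OF c])
  have generators: "nab (dxb mu) = inner_conn (Valg p q) s (dxb mu)" for mu
    by (simp add: inner_conn_dxb[OF s] sigma_basis_E[OF c]) (simp add: add2_def fun_eq_iff)
  have "inner_conn (Valg p q) s w
      = add2 (add2 (smul2 (w E) (inner_conn (Valg p q) s (dxb E))) (tens (Valg p q) (dd (Valg p q) (w E)) (dxb E)))
             (add2 (smul2 (w X) (inner_conn (Valg p q) s (dxb X))) (tens (Valg p q) (dd (Valg p q) (w X)) (dxb X)))"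
    by (rule left_connection_expand) (simp_all add: inner_conn_add[OF s] inner_conn_left[OF s])
  then show ?thesis
    by (subst bimod_conn_expand[OF c]) (simp only: generators)
qed

section \<open>Torsion freeness means symmetric Christoffel symbols\<close>

definition symmetric2 :: "om2 \<Rightarrow> bool" where
  "symmetric2 T \<longleftrightarrow> (\<forall>a b. T a b = T b a)"

lemma symmetric2_rmul2: "symmetric2 T \<Longrightarrow> symmetric2 (rmul2 (Valg p q) r T)"
proof (induction r arbitrary: T rule: poly2_induct)
  case (Const c)
  then show ?case by (simp add: rmul2_Const symmetric2_def smul2_def)
next
  case (Var i)
  have "xcomm2 p q T a b = xcomm2 p q T b a" for a b
    using Var unfolding symmetric2_def xcomm2_def by (cases a; cases b) (simp_all add: algebra_simps)
  with Var show ?case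
    by (cases i) (simp_all add: rmul2_Var_E rmul2_Var_X symmetric2_def smul2_def add2_def)
next
  case (add r1 r2)
  then show ?case by (simp add: rmul2_add_poly symmetric2_def add2_def)
next
  case (mult r1 r2)
  then show ?case by (simp add: rmul2_mult)
qed

lemma wedge_ker_symmetric2: "T \<in> wedge_ker (Valg p q) \<Longrightarrow> symmetric2 T"
proof (induction rule: wedge_ker.induct)
  case (wk_sym mu nu)
  then show ?case
    unfolding symmetric2_def basis2_def add2_def by (intro allI, subst add.commute) (simp only: conj_commute)
next
  case (wk_rmul T c)
  then show ?case by (simp add: symmetric2_rmul2)
qed (auto simp: symmetric2_def zero2_def basis2_def add2_def smul2_def)

lemma symmetric2_wedge_ker:
  assumes "symmetric2 T"
  shows "T \<in> wedge_ker V"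
proof -
  have "T = add2 (add2 (smul2 (T E E) (basis2 E E)) (smul2 (T X X) (basis2 X X)))
             (smul2 (T E X) (add2 (basis2 E X) (basis2 X E)))"
    using assms unfolding symmetric2_def
    by (intro ext, case_tac x; case_tac xa) (simp_all add: add2_def smul2_def basis2_def)
  also have "\<dots> \<in> wedge_ker V"
    by (intro wedge_ker.intros)
  finally show ?thesis .
qed

lemma torsion_free_iff_symmetric2:
  assumes c: "bimod_conn (Valg p q) nab s"
  shows "torsion_free (Valg p q) nab \<longleftrightarrow> symmetric2 (nab (dxb E)) \<and> symmetric2 (nab (dxb X))"
proof -
  have torsion: "sub2 (nab w) (dd1 (Valg p q) w) = add2 (smul2 (w E) (nab (dxb E))) (smul2 (w X) (nab (dxb X)))" for w
    by (subst bimod_conn_expand[OF c, of w])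
      (simp add: dd1_def sum_UNIV_idx sub2_eq_add2 add2_def fun_eq_iff algebra_simps)
  show ?thesis
  proof
    assume "torsion_free (Valg p q) nab"
    then have "sub2 (nab (dxb mu)) (dd1 (Valg p q) (dxb mu)) \<in> wedge_ker (Valg p q)" for mu
      by (simp add: torsion_free_def)
    then have "symmetric2 (add2 (smul2 (dxb mu E) (nab (dxb E))) (smul2 (dxb mu X) (nab (dxb X))))" for mu
      unfolding torsion by (rule wedge_ker_symmetric2)
    from this[of E] this[of X] show "symmetric2 (nab (dxb E)) \<and> symmetric2 (nab (dxb X))"
      by (simp_all add: dxb_def symmetric2_def add2_def smul2_def)
  next
    assume "symmetric2 (nab (dxb E)) \<and> symmetric2 (nab (dxb X))"
    then show "torsion_free (Valg p q) nab"
      unfolding torsion_free_def torsion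
      by (auto intro!: symmetric2_wedge_ker simp: symmetric2_def add2_def smul2_def)
  qed
qed

section \<open>Constant coefficients: reduction to equations over bits\<close>

definition ctens :: "(idx \<Rightarrow> idx \<Rightarrow> bit) \<Rightarrow> om2" where
  "ctens M = (\<lambda>a b. Const (M a b))"

definition unit_mat :: "idx \<Rightarrow> idx \<Rightarrow> idx \<Rightarrow> idx \<Rightarrow> bit" where
  "unit_mat i j = (\<lambda>a b. if a = i \<and> b = j then 1 else 0)"

lemma ctens_eq_iff: "ctens M = ctens N \<longleftrightarrow> M = N"
  by (auto simp: ctens_def fun_eq_iff Const_eq_iff)

lemma cten_eq_ctens: "cten a b c d = ctens (mat2 a b c d)"
  by (simp add: cten_def ctens_def)

lemma basis2_ctens: "basis2 i j = ctens (unit_mat i j)"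
  by (simp add: basis2_def ctens_def unit_mat_def fun_eq_iff)

lemma add2_ctens: "add2 (ctens M) (ctens N) = ctens (\<lambda>a b. M a b + N a b)"
  by (simp add: add2_def ctens_def Const_add)

lemma smul2_ctens: "smul2 (Const c) (ctens M) = ctens (\<lambda>a b. c * M a b)"
  by (simp add: smul2_def ctens_def Const_mult)

lemma symmetric2_ctens: "symmetric2 (ctens M) \<longleftrightarrow> (\<forall>a b. M a b = M b a)"
  by (simp add: symmetric2_def ctens_def Const_eq_iff)

definition xcomm_mat :: "bit \<Rightarrow> bit \<Rightarrow> (idx \<Rightarrow> idx \<Rightarrow> bit) \<Rightarrow> idx \<Rightarrow> idx \<Rightarrow> bit" where
  "xcomm_mat p q M = (\<lambda>a b. (if a = X then M E b else 0) + M X b * (if a = E then p else q)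
       + (if b = X then M a E else 0) + M a X * (if b = E then p else q))"

lemma xcomm2_ctens: "xcomm2 p q (ctens M) = ctens (xcomm_mat p q M)"
  by (rule ext, rule ext, case_tac x; case_tac xa)
    (simp_all add: xcomm2_def xcomm_mat_def ctens_def Const_add Const_mult)

definition xcomm_vec :: "bit \<Rightarrow> bit \<Rightarrow> idx \<Rightarrow> idx \<Rightarrow> bit" where
  "xcomm_vec p q mu r = (if r = X \<and> mu = E then 1 else 0) + (if mu = X then (if r = E then p else q) else 0)"

lemma xcomm1_dxb: "xcomm1 p q (dxb mu) = (\<lambda>r. Const (xcomm_vec p q mu r))"
  by (rule ext, case_tac mu; case_tac r) (simp_all add: xcomm1_def xcomm_vec_def dxb_def)

lemma bimod_conn_const_form:
  assumes c: "bimod_conn (Valg p q) nab s"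
  shows "nab (\<lambda>r. Const (v r))
       = add2 (smul2 (Const (v E)) (nab (dxb E))) (smul2 (Const (v X)) (nab (dxb X)))"
  by (subst bimod_conn_expand[OF c]) (simp add: tens_zero_left add2_def zero2_def)

text \<open>Coefficient of dx^a \<otimes> dx^b in \<sigma>(dx^\<mu> \<otimes> dx^\<nu>) when \<nabla> dx^\<mu> has constant coefficients
  G \<mu>, read off from \<open>sigma_basis_E\<close> and \<open>sigma_basis_X\<close>.\<close>
definition sigma_mat :: "bit \<Rightarrow> bit \<Rightarrow> (idx \<Rightarrow> idx \<Rightarrow> idx \<Rightarrow> bit) \<Rightarrow> idx \<Rightarrow> idx \<Rightarrow> idx \<Rightarrow> idx \<Rightarrow> bit" where
  "sigma_mat p q G mu nu = (if nu = E then (\<lambda>a b. unit_mat E mu a b + G mu a b)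
     else (\<lambda>a b. unit_mat X mu a b + xcomm_vec p q mu E * G E a b + xcomm_vec p q mu X * G X a b
                 + xcomm_mat p q (G mu) a b))"

lemma sigma_basis_ctens:
  assumes c: "bimod_conn (Valg p q) nab s" and G: "\<And>mu. nab (dxb mu) = ctens (G mu)"
  shows "s (basis2 mu nu) = ctens (sigma_mat p q G mu nu)"
proof (cases nu)
  case E
  then show ?thesis
    using sigma_basis_E[OF c] by (simp add: G basis2_ctens add2_ctens sigma_mat_def)
next
  case X
  then show ?thesis
    using sigma_basis_X[OF c]
    by (simp add: add.assoc G xcomm1_dxb bimod_conn_const_form[OF c] basis2_ctens add2_ctens
        smul2_ctens xcomm2_ctens sigma_mat_def)
qed

definition mat_apply :: "(idx \<Rightarrow> idx \<Rightarrow> idx \<Rightarrow> idx \<Rightarrow> bit) \<Rightarrow> (idx \<Rightarrow> idx \<Rightarrow> bit) \<Rightarrow> idx \<Rightarrow> idx \<Rightarrow> bit" where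
  "mat_apply S M = (\<lambda>a b. \<Sum>i\<in>UNIV. \<Sum>j\<in>UNIV. M i j * S i j a b)"

lemma mat_apply_unit_mat: "mat_apply S (unit_mat i j) = S i j"
  by (cases i; cases j) (simp_all add: mat_apply_def unit_mat_def sum_UNIV_idx fun_eq_iff)

lemma bimodule_map2_ctens:
  assumes s: "bimodule_map2 V s" and S: "\<And>i j. s (basis2 i j) = ctens (S i j)"
  shows "s (ctens M) = ctens (mat_apply S M)"
  by (subst om2_basis_decomp[of "ctens M"], unfold bimodule_map2_add[OF s] bimodule_map2_smul2[OF s])
    (simp add: S ctens_def mat_apply_def sum_UNIV_idx add2_def smul2_def Const_add Const_mult add_ac)

text \<open>The metric compatibility tensor, coefficient of dx^a \<otimes> dx^b \<otimes> dx^c.\<close>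
definition compat_defect ::
  "(idx \<Rightarrow> idx \<Rightarrow> bit) \<Rightarrow> (idx \<Rightarrow> idx \<Rightarrow> idx \<Rightarrow> bit) \<Rightarrow> (idx \<Rightarrow> idx \<Rightarrow> idx \<Rightarrow> idx \<Rightarrow> bit) \<Rightarrow> idx \<Rightarrow> idx \<Rightarrow> idx \<Rightarrow> bit" where
  "compat_defect g G S a b c
     = (\<Sum>mu\<in>UNIV. g mu c * G mu a b) + mat_apply S (\<lambda>i j. \<Sum>nu\<in>UNIV. g i nu * G nu j c) a b"

lemma metric_compat_iff_compat_defect:
  assumes c: "bimod_conn (Valg p q) nab s" and G: "\<And>mu. nab (dxb mu) = ctens (G mu)"
    and S: "\<And>i j. s (basis2 i j) = ctens (S i j)"
  shows "metric_compat (Valg p q) g nab s \<longleftrightarrow> (\<forall>a b c. compat_defect g G S a b c = 0)"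
proof -
  let ?V = "Valg p q"
  have nab_const: "nab (smul1 (Const x) (dxb mu)) = ctens (\<lambda>a b. x * G mu a b)" for x mu
    by (simp add: bimod_conn_left[OF c] G tens_zero_left smul2_ctens) (simp add: add2_def zero2_def)
  have first: "(\<Sum>mu\<in>UNIV. \<Sum>nu\<in>UNIV. tens21 ?V (nab (smul1 (Const (g mu nu)) (dxb mu))) (dxb nu) a b c)
        = Const (\<Sum>mu\<in>UNIV. g mu c * G mu a b)" for a b c
    by (cases c) (simp_all add: nab_const tens21_dxb sum_UNIV_idx ctens_def Const_add Const_mult)
  have tens12_const: "tens12 ?V (smul1 (Const x) (dxb mu)) (ctens M)
      = (\<lambda>i j k. Const (if i = mu then x * M j k else 0))" for x mu M
    by (simp add: tens12_def ctens_def rmul1_Const smul1_def dxb_def Const_mult fun_eq_iff)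
  have inner: "(\<lambda>i j. \<Sum>mu\<in>UNIV. \<Sum>nu\<in>UNIV. tens12 ?V (smul1 (Const (g mu nu)) (dxb mu)) (nab (dxb nu)) i j c)
        = ctens (\<lambda>i j. \<Sum>nu\<in>UNIV. g i nu * G nu j c)" for c
    unfolding G tens12_const by (simp add: fun_eq_iff all_idx sum_UNIV_idx ctens_def Const_add)
  have second: "sigma_id ?V s (\<lambda>i j k. \<Sum>mu\<in>UNIV. \<Sum>nu\<in>UNIV.
          tens12 ?V (smul1 (Const (g mu nu)) (dxb mu)) (nab (dxb nu)) i j k) a b c
        = Const (mat_apply S (\<lambda>i j. \<Sum>nu\<in>UNIV. g i nu * G nu j c) a b)" for a b c
  proof -
    have "sigma_id ?V s (\<lambda>i j k. \<Sum>mu\<in>UNIV. \<Sum>nu\<in>UNIV.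
          tens12 ?V (smul1 (Const (g mu nu)) (dxb mu)) (nab (dxb nu)) i j k) a b c
        = s (\<lambda>i j. \<Sum>mu\<in>UNIV. \<Sum>nu\<in>UNIV. tens12 ?V (smul1 (Const (g mu nu)) (dxb mu)) (nab (dxb nu)) i j c) a b"
      by (cases c) (simp_all add: sigma_id_def tens21_dxb sum_UNIV_idx)
    also have "\<dots> = Const (mat_apply S (\<lambda>i j. \<Sum>nu\<in>UNIV. g i nu * G nu j c) a b)"
      by (simp only: inner bimodule_map2_ctens[OF bimod_conn_bimodule_map2[OF c] S]) (simp add: ctens_def)
    finally show ?thesis .
  qed
  show ?thesis
    unfolding metric_compat_def first second
    by (simp add: fun_eq_iff Const_add[symmetric] Const_eq_0_iff compat_defect_def)
qed

definition sigma_of_mat :: "(idx \<Rightarrow> idx \<Rightarrow> idx \<Rightarrow> idx \<Rightarrow> bit) \<Rightarrow> om2 \<Rightarrow> om2" where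
  "sigma_of_mat S T = (\<lambda>a b. \<Sum>i\<in>UNIV. \<Sum>j\<in>UNIV. T i j * Const (S i j a b))"

lemma sigma_of_mat_add2: "sigma_of_mat S (add2 T U) = add2 (sigma_of_mat S T) (sigma_of_mat S U)"
  by (simp add: sigma_of_mat_def add2_def sum_UNIV_idx algebra_simps)

lemma sigma_of_mat_smul2: "sigma_of_mat S (smul2 c T) = smul2 c (sigma_of_mat S T)"
  by (simp add: sigma_of_mat_def smul2_def sum_UNIV_idx algebra_simps)

lemma sigma_of_mat_basis2: "sigma_of_mat S (basis2 i j) = ctens (S i j)"
  by (cases i; cases j) (simp_all add: sigma_of_mat_def basis2_def sum_UNIV_idx ctens_def)

lemma sigma_of_mat_ctens: "sigma_of_mat S (ctens M) = ctens (mat_apply S M)"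
  by (simp add: sigma_of_mat_def ctens_def mat_apply_def sum_UNIV_idx Const_add Const_mult)

lemma xcomm2_add2: "xcomm2 p q (add2 S T) = add2 (xcomm2 p q S) (xcomm2 p q T)"
  by (rule ext, rule ext, case_tac x; case_tac xa) (simp_all add: xcomm2_def add2_def algebra_simps)

lemma xcomm2_smul2: "xcomm2 p q (smul2 c T) = smul2 c (xcomm2 p q T)"
  by (rule ext, rule ext, case_tac x; case_tac xa) (simp_all add: xcomm2_def smul2_def algebra_simps)

lemma sigma_of_mat_xcomm2:
  assumes S: "\<And>i j. mat_apply S (xcomm_mat p q (unit_mat i j)) = xcomm_mat p q (S i j)"
  shows "sigma_of_mat S (xcomm2 p q T) = xcomm2 p q (sigma_of_mat S T)"
proof -
  have "sigma_of_mat S (xcomm2 p q (basis2 i j)) = xcomm2 p q (sigma_of_mat S (basis2 i j))" for i j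
    by (simp add: basis2_ctens xcomm2_ctens sigma_of_mat_ctens S mat_apply_unit_mat)
  then show ?thesis
    by (subst (1 2) om2_basis_decomp[of T])
      (simp only: xcomm2_add2 xcomm2_smul2 sigma_of_mat_add2 sigma_of_mat_smul2)
qed

lemma sigma_of_mat_rmul2:
  assumes S: "\<And>i j. mat_apply S (xcomm_mat p q (unit_mat i j)) = xcomm_mat p q (S i j)"
  shows "sigma_of_mat S (rmul2 (Valg p q) r T) = rmul2 (Valg p q) r (sigma_of_mat S T)"
proof (induction r arbitrary: T rule: poly2_induct)
  case (Var i)
  then show ?case
    by (cases i) (simp_all add: rmul2_Var_E rmul2_Var_X sigma_of_mat_smul2 sigma_of_mat_add2
        sigma_of_mat_xcomm2[OF S])
qed (simp_all add: rmul2_Const sigma_of_mat_smul2 rmul2_add_poly sigma_of_mat_add2 rmul2_mult)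

lemma sigma_of_mat_comp: "sigma_of_mat S (sigma_of_mat S' T) = sigma_of_mat (\<lambda>i j. mat_apply S (S' i j)) T"
  by (simp add: sigma_of_mat_def mat_apply_def sum_UNIV_idx Const_add Const_mult fun_eq_iff algebra_simps)

lemma sigma_of_mat_unit_mat: "sigma_of_mat unit_mat T = T"
  by (rule ext, rule ext, case_tac x; case_tac xa) (simp_all add: sigma_of_mat_def unit_mat_def sum_UNIV_idx)

lemma bij_sigma_of_mat:
  assumes "\<And>i j. mat_apply S (S i j) = unit_mat i j"
  shows "bij (sigma_of_mat S)"
proof -
  have "sigma_of_mat S (sigma_of_mat S T) = T" for T
    by (simp add: sigma_of_mat_comp assms sigma_of_mat_unit_mat)
  then show ?thesis
    by (intro o_bij[of "sigma_of_mat S"]) (simp_all add: fun_eq_iff)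
qed

definition metric_compatible_bits :: "bit \<Rightarrow> bit \<Rightarrow> (idx \<Rightarrow> idx \<Rightarrow> bit) \<Rightarrow> (idx \<Rightarrow> idx \<Rightarrow> idx \<Rightarrow> bit) \<Rightarrow> bool" where
  "metric_compatible_bits p q g G \<longleftrightarrow> (\<forall>a b c. compat_defect g G (sigma_mat p q G) a b c = 0)"

definition QLC_bits :: "bit \<Rightarrow> bit \<Rightarrow> (idx \<Rightarrow> idx \<Rightarrow> bit) \<Rightarrow> (idx \<Rightarrow> idx \<Rightarrow> idx \<Rightarrow> bit) \<Rightarrow> bool" where
  "QLC_bits p q g G \<longleftrightarrow>
     (\<forall>i j a b. mat_apply (sigma_mat p q G) (xcomm_mat p q (unit_mat i j)) a b = xcomm_mat p q (sigma_mat p q G i j) a b)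
     \<and> (\<forall>i j a b. mat_apply (sigma_mat p q G) (sigma_mat p q G i j) a b = unit_mat i j a b)
     \<and> metric_compatible_bits p q g G"

lemma QLC_of_QLC_bits:
  assumes sym: "\<And>mu a b. G mu a b = G mu b a" and G: "QLC_bits p q g G"
  shows "\<exists>nab s. QLC (Valg p q) g nab s \<and> const_coeff nab
           \<and> nab (dxb E) = ctens (G E) \<and> nab (dxb X) = ctens (G X)"
proof -
  let ?V = "Valg p q" and ?S = "sigma_mat p q G"
  let ?s = "sigma_of_mat ?S"
  let ?nab = "inner_conn ?V ?s"
  have s: "bimodule_map2 ?V ?s"
    using G by (simp add: bimodule_map2_def sigma_of_mat_add2 sigma_of_mat_smul2 sigma_of_mat_rmul2
        QLC_bits_def fun_eq_iff)
  have c: "bimod_conn ?V ?nab ?s"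
    by (rule inner_conn_bimod_conn[OF s])
  have nab: "?nab (dxb mu) = ctens (G mu)" for mu
    unfolding inner_conn_dxb[OF s] sigma_of_mat_basis2 by (simp add: basis2_ctens add2_ctens sigma_mat_def)
  have "QLC ?V g ?nab ?s"
    unfolding QLC_def
  proof (intro conjI c)
    show "bij ?s"
      using G by (intro bij_sigma_of_mat) (simp add: QLC_bits_def fun_eq_iff)
    show "torsion_free ?V ?nab"
      using sym by (simp add: torsion_free_iff_symmetric2[OF c] nab symmetric2_ctens)
    show "metric_compat ?V g ?nab ?s"
      using G by (simp add: metric_compat_iff_compat_defect[OF c nab sigma_of_mat_basis2]
          QLC_bits_def metric_compatible_bits_def)
  qed
  moreover have "const_coeff ?nab"
    unfolding const_coeff_def by (metis nab ctens_def)
  ultimately show ?thesis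
    using nab by blast
qed

lemma QLC_metric_compatible_bits:
  assumes Q: "QLC (Valg p q) g nab s" and const: "const_coeff nab"
  obtains G where "nab (dxb E) = ctens (G E)" "nab (dxb X) = ctens (G X)"
    "\<And>mu a b. G mu a b = G mu b a" "metric_compatible_bits p q g G"
proof -
  have c: "bimod_conn (Valg p q) nab s"
    using Q by (simp add: QLC_def)
  obtain G where G: "nab (dxb mu) = ctens (G mu)" for mu
    using const unfolding const_coeff_def ctens_def by metis
  have "symmetric2 (ctens (G mu))" for mu
    using Q torsion_free_iff_symmetric2[OF c] G by (cases mu) (auto simp: QLC_def)
  moreover have "metric_compatible_bits p q g G"
    using Q metric_compat_iff_compat_defect[OF c G sigma_basis_ctens[OF c G]]
    by (simp add: QLC_def metric_compatible_bits_def)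
  ultimately show thesis
    using that G by (simp add: symmetric2_ctens)
qed

lemma QLC_zero_connection_sigma_flip:
  assumes c: "bimod_conn (Valg p q) nab s" and "nab (dxb E) = zero2" "nab (dxb X) = zero2"
  shows "s (basis2 mu nu) = basis2 nu mu"
proof -
  have "nab (dxb m) = ctens (\<lambda>_ _. 0)" for m
    using assms by (cases m) (simp_all add: zero2_def ctens_def)
  then have "s (basis2 mu nu) = ctens (sigma_mat p q (\<lambda>_ _ _. 0) mu nu)"
    by (rule sigma_basis_ctens[OF c])
  then show ?thesis
    by (cases nu) (simp_all add: basis2_ctens sigma_mat_def xcomm_mat_def)
qed

lemma central_metric_iff_xcomm_mat:
  "(\<forall>rho. smul2 (Var rho) (metric_tensor g) = rmul2 (Valg p q) (Var rho) (metric_tensor g))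
     \<longleftrightarrow> (\<forall>a b. xcomm_mat p q g a b = 0)"
proof -
  have metric: "metric_tensor g = ctens g"
    by (simp add: metric_tensor_def ctens_def)
  show ?thesis
    unfolding metric all_idx rmul2_Var_E rmul2_Var_X xcomm2_ctens
    by (simp add: fun_eq_iff add2_def ctens_def Const_eq_0_iff all_idx)
qed

lemma invertible2_iff_det: "invertible2 g \<longleftrightarrow> g E E * g X X + g E X * g X E = 1"
proof
  assume "invertible2 g"
  then obtain h where "\<forall>i j. (\<Sum>k\<in>UNIV. g i k * h k j) = (if i = j then 1 else 0)"
    unfolding invertible2_def by blast
  then have "g E E * h E E + g E X * h X E = 1" "g E E * h E X + g E X * h X X = 0"
     "g X E * h E E + g X X * h X E = 0" "g X E * h E X + g X X * h X X = 1"
    by (simp_all add: sum_UNIV_idx all_idx)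
  then show "g E E * g X X + g E X * g X E = 1"
    by (cases "g E E"; cases "g E X"; cases "g X E"; cases "g X X";
        cases "h E E"; cases "h E X"; cases "h X E"; cases "h X X") simp_all
next
  assume "g E E * g X X + g E X * g X E = 1"
  then have "(\<forall>i j. (\<Sum>k\<in>UNIV. g i k * h k j) = (if i = j then 1 else 0))
      \<and> (\<forall>i j. (\<Sum>k\<in>UNIV. h i k * g k j) = (if i = j then 1 else 0))"
    if "h = mat2 (g X X) (g E X) (g X E) (g E E)" for h
    using that by (cases "g E E"; cases "g E X"; cases "g X E"; cases "g X X")
      (simp_all add: sum_UNIV_idx all_idx mat2_def)
  then show "invertible2 g"
    unfolding invertible2_def by blast
qed

lemma quantum_metric_Valg_iff:
  "quantum_metric (Valg p q) g \<longleftrightarrow>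
     (\<forall>i j. g i j = g j i) \<and> g E E * g X X + g E X * g X E = 1 \<and> (\<forall>a b. xcomm_mat p q g a b = 0)"
  by (simp add: quantum_metric_def central_metric_iff_xcomm_mat invertible2_iff_det)

lemma mat2_entries: "mat2 (g E E) (g E X) (g X E) (g X X) = g"
  by (intro ext, case_tac x; case_tac xa) (simp_all add: mat2_def)

lemma mat2_eq_iff: "mat2 a b c d = mat2 a' b' c' d' \<longleftrightarrow> a = a' \<and> b = b' \<and> c = c' \<and> d = d'"
  by (auto simp: mat2_def fun_eq_iff all_idx)

lemma quantum_metrics_Valg_eqI:
  assumes "\<And>a b c d. quantum_metric (Valg p q) (mat2 a b c d) \<longleftrightarrow> mat2 a b c d \<in> M"
  shows "{g. quantum_metric (Valg p q) g} = M"
  using assms[of "g E E" "g E X" "g X E" "g X X" for g] by (auto simp: mat2_entries)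

lemma quantum_metrics_VA: "{g. quantum_metric VA g} = {gAI, gAII}"
  unfolding VA_def
proof (rule quantum_metrics_Valg_eqI)
  fix a b c d :: bit
  show "quantum_metric (Valg 0 0) (mat2 a b c d) \<longleftrightarrow> mat2 a b c d \<in> {gAI, gAII}"
    unfolding quantum_metric_Valg_iff gAI_def gAII_def insert_iff empty_iff mat2_eq_iff
    by (cases a; cases b; cases c; cases d) (simp_all add: all_idx xcomm_mat_def mat2_def)
qed

lemma quantum_metrics_VB: "{g. quantum_metric VB g} = {gB}"
  unfolding VB_def
proof (rule quantum_metrics_Valg_eqI)
  fix a b c d :: bit
  show "quantum_metric (Valg 0 1) (mat2 a b c d) \<longleftrightarrow> mat2 a b c d \<in> {gB}"
    unfolding quantum_metric_Valg_iff gB_def insert_iff empty_iff mat2_eq_iff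
    by (cases a; cases b; cases c; cases d) (simp_all add: all_idx xcomm_mat_def mat2_def)
qed

lemma quantum_metrics_VC: "{g. quantum_metric VC g} = {gCI, gCII, gCIII}"
  unfolding VC_def
proof (rule quantum_metrics_Valg_eqI)
  fix a b c d :: bit
  show "quantum_metric (Valg 1 1) (mat2 a b c d) \<longleftrightarrow> mat2 a b c d \<in> {gCI, gCII, gCIII}"
    unfolding quantum_metric_Valg_iff gCI_def gCII_def gCIII_def insert_iff empty_iff mat2_eq_iff
    by (cases a; cases b; cases c; cases d) (simp_all add: all_idx xcomm_mat_def mat2_def)
qed

definition christoffel :: "bit \<Rightarrow> bit \<Rightarrow> bit \<Rightarrow> bit \<Rightarrow> bit \<Rightarrow> bit \<Rightarrow> idx \<Rightarrow> idx \<Rightarrow> idx \<Rightarrow> bit" where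
  "christoffel b1 b2 b3 b4 b5 b6 = (\<lambda>mu. if mu = E then mat2 b1 b2 b2 b3 else mat2 b4 b5 b5 b6)"

lemma symmetric_christoffel:
  assumes "\<And>mu a b. G mu a b = G mu b a"
  shows "G = christoffel (G E E E) (G E E X) (G E X X) (G X E E) (G X E X) (G X X X)"
proof (intro ext)
  fix mu a b
  show "G mu a b = christoffel (G E E E) (G E E X) (G E X X) (G X E E) (G X E X) (G X X X) mu a b"
    unfolding christoffel_def mat2_def by (cases mu; cases a; cases b) (simp_all add: assms[of _ X E])
qed

lemma constant_QLCs_Valg:
  assumes exhaustive: "\<And>b1 b2 b3 b4 b5 b6. metric_compatible_bits p q g (christoffel b1 b2 b3 b4 b5 b6)
      \<Longrightarrow> (ctens (mat2 b1 b2 b2 b3), ctens (mat2 b4 b5 b5 b6)) \<in> L"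
    and realisable: "\<And>x. x \<in> L \<Longrightarrow> \<exists>b1 b2 b3 b4 b5 b6.
      x = (ctens (mat2 b1 b2 b2 b3), ctens (mat2 b4 b5 b5 b6)) \<and> QLC_bits p q g (christoffel b1 b2 b3 b4 b5 b6)"
  shows "(\<forall>nab s. QLC (Valg p q) g nab s \<and> const_coeff nab \<longrightarrow> (nab (dxb E), nab (dxb X)) \<in> L)
    \<and> (\<forall>(nE, nX) \<in> L. \<exists>nab s. QLC (Valg p q) g nab s \<and> const_coeff nab \<and> nab (dxb E) = nE \<and> nab (dxb X) = nX)
    \<and> (\<forall>nab s. QLC (Valg p q) g nab s \<and> const_coeff nab \<longrightarrow>
         (\<forall>w. nab w = sub2 (tens (Valg p q) (dxb E) w) (s (tens (Valg p q) w (dxb E)))))"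
proof (intro conjI allI impI ballI; (elim conjE)?)
  fix nab s
  assume Q: "QLC (Valg p q) g nab s" and const: "const_coeff nab"
  obtain G where nab: "nab (dxb E) = ctens (G E)" "nab (dxb X) = ctens (G X)"
    and sym: "\<And>mu a b. G mu a b = G mu b a" and compatible: "metric_compatible_bits p q g G"
    using QLC_metric_compatible_bits[OF Q const] by blast
  have G: "G = christoffel (G E E E) (G E E X) (G E X X) (G X E E) (G X E X) (G X X X)"
    by (rule symmetric_christoffel[OF sym])
  have "G E = mat2 (G E E E) (G E E X) (G E E X) (G E X X)"
    and "G X = mat2 (G X E E) (G X E X) (G X E X) (G X X X)"
    by (subst G, simp add: christoffel_def)+
  with nab exhaustive[of "G E E E" "G E E X" "G E X X" "G X E E" "G X E X" "G X X X"] compatible G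
  show "(nab (dxb E), nab (dxb X)) \<in> L"
    by simp
  fix w
  show "nab w = sub2 (tens (Valg p q) (dxb E) w) (s (tens (Valg p q) w (dxb E)))"
    using Q bimod_conn_eq_inner_conn[of p q nab s w] by (simp add: QLC_def inner_conn_def)
next
  fix x
  assume "x \<in> L"
  then obtain b1 b2 b3 b4 b5 b6 where x: "x = (ctens (mat2 b1 b2 b2 b3), ctens (mat2 b4 b5 b5 b6))"
    and "QLC_bits p q g (christoffel b1 b2 b3 b4 b5 b6)"
    using realisable by blast
  then have "\<exists>nab s. QLC (Valg p q) g nab s \<and> const_coeff nab
      \<and> nab (dxb E) = ctens (mat2 b1 b2 b2 b3) \<and> nab (dxb X) = ctens (mat2 b4 b5 b5 b6)"
    using QLC_of_QLC_bits[of "christoffel b1 b2 b3 b4 b5 b6"]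
    by (simp add: christoffel_def mat2_def split: idx.split)
  then show "case x of (nE, nX) \<Rightarrow> \<exists>nab s. QLC (Valg p q) g nab s \<and> const_coeff nab
      \<and> nab (dxb E) = nE \<and> nab (dxb X) = nX"
    by (simp add: x)
qed

text \<open>The remaining lemmas are finite searches over the 2^6 symmetric Christoffel symbols.\<close>

lemmas QLC_bits_simps = metric_compatible_bits_def QLC_bits_def compat_defect_def mat_apply_def
  sum_UNIV_idx sigma_mat_def xcomm_mat_def xcomm_vec_def unit_mat_def mat2_def christoffel_def all_idx

lemmas connection_simps = conn0_def connA1_def connA2_def connA3_def connA4_def connA5_def connB_def
  connCI_def connCII_def connCIII_def cten_eq_ctens ctens_eq_iff mat2_eq_iff

lemma compatible_christoffels_gAI:
  "metric_compatible_bits 0 0 gAI (christoffel b1 b2 b3 b4 b5 b6) \<Longrightarrow>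
     (ctens (mat2 b1 b2 b2 b3), ctens (mat2 b4 b5 b5 b6)) \<in> {conn0, connA1, connA2, connA3, connA4, connA5}"
  by (cases b1; cases b2; cases b3; cases b4; cases b5; cases b6) (simp_all add: QLC_bits_simps gAI_def connection_simps)

lemma listed_QLCs_gAI: "x \<in> {conn0, connA1, connA2, connA3, connA4, connA5} \<Longrightarrow> \<exists>b1 b2 b3 b4 b5 b6.
    x = (ctens (mat2 b1 b2 b2 b3), ctens (mat2 b4 b5 b5 b6)) \<and> QLC_bits 0 0 gAI (christoffel b1 b2 b3 b4 b5 b6)"
  by (auto simp: connection_simps QLC_bits_simps gAI_def)

lemma compatible_christoffels_gAII:
  "metric_compatible_bits 0 0 gAII (christoffel b1 b2 b3 b4 b5 b6) \<Longrightarrow>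
     (ctens (mat2 b1 b2 b2 b3), ctens (mat2 b4 b5 b5 b6)) \<in> {conn0, connA1, connA2, connA3}"
  by (cases b1; cases b2; cases b3; cases b4; cases b5; cases b6) (simp_all add: QLC_bits_simps gAII_def connection_simps)

lemma listed_QLCs_gAII: "x \<in> {conn0, connA1, connA2, connA3} \<Longrightarrow> \<exists>b1 b2 b3 b4 b5 b6.
    x = (ctens (mat2 b1 b2 b2 b3), ctens (mat2 b4 b5 b5 b6)) \<and> QLC_bits 0 0 gAII (christoffel b1 b2 b3 b4 b5 b6)"
  by (auto simp: connection_simps QLC_bits_simps gAII_def)

lemma compatible_christoffels_gB:
  "metric_compatible_bits 0 1 gB (christoffel b1 b2 b3 b4 b5 b6) \<Longrightarrow>
     (ctens (mat2 b1 b2 b2 b3), ctens (mat2 b4 b5 b5 b6)) \<in> {conn0, connB}"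
  by (cases b1; cases b2; cases b3; cases b4; cases b5; cases b6) (simp_all add: QLC_bits_simps gB_def connection_simps)

lemma listed_QLCs_gB: "x \<in> {conn0, connB} \<Longrightarrow> \<exists>b1 b2 b3 b4 b5 b6.
    x = (ctens (mat2 b1 b2 b2 b3), ctens (mat2 b4 b5 b5 b6)) \<and> QLC_bits 0 1 gB (christoffel b1 b2 b3 b4 b5 b6)"
  by (auto simp: connection_simps QLC_bits_simps gB_def)

lemma compatible_christoffels_gCI:
  "metric_compatible_bits 1 1 gCI (christoffel b1 b2 b3 b4 b5 b6) \<Longrightarrow>
     (ctens (mat2 b1 b2 b2 b3), ctens (mat2 b4 b5 b5 b6)) \<in> {conn0, connCI}"
  by (cases b1; cases b2; cases b3; cases b4; cases b5; cases b6) (simp_all add: QLC_bits_simps gCI_def connection_simps)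

lemma listed_QLCs_gCI: "x \<in> {conn0, connCI} \<Longrightarrow> \<exists>b1 b2 b3 b4 b5 b6.
    x = (ctens (mat2 b1 b2 b2 b3), ctens (mat2 b4 b5 b5 b6)) \<and> QLC_bits 1 1 gCI (christoffel b1 b2 b3 b4 b5 b6)"
  by (auto simp: connection_simps QLC_bits_simps gCI_def)

lemma compatible_christoffels_gCII:
  "metric_compatible_bits 1 1 gCII (christoffel b1 b2 b3 b4 b5 b6) \<Longrightarrow>
     (ctens (mat2 b1 b2 b2 b3), ctens (mat2 b4 b5 b5 b6)) \<in> {conn0, connCII}"
  by (cases b1; cases b2; cases b3; cases b4; cases b5; cases b6) (simp_all add: QLC_bits_simps gCII_def connection_simps)

lemma listed_QLCs_gCII: "x \<in> {conn0, connCII} \<Longrightarrow> \<exists>b1 b2 b3 b4 b5 b6.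
    x = (ctens (mat2 b1 b2 b2 b3), ctens (mat2 b4 b5 b5 b6)) \<and> QLC_bits 1 1 gCII (christoffel b1 b2 b3 b4 b5 b6)"
  by (auto simp: connection_simps QLC_bits_simps gCII_def)

lemma compatible_christoffels_gCIII:
  "metric_compatible_bits 1 1 gCIII (christoffel b1 b2 b3 b4 b5 b6) \<Longrightarrow>
     (ctens (mat2 b1 b2 b2 b3), ctens (mat2 b4 b5 b5 b6)) \<in> {conn0, connCIII}"
  by (cases b1; cases b2; cases b3; cases b4; cases b5; cases b6) (simp_all add: QLC_bits_simps gCIII_def connection_simps)

lemma listed_QLCs_gCIII: "x \<in> {conn0, connCIII} \<Longrightarrow> \<exists>b1 b2 b3 b4 b5 b6.
    x = (ctens (mat2 b1 b2 b2 b3), ctens (mat2 b4 b5 b5 b6)) \<and> QLC_bits 1 1 gCIII (christoffel b1 b2 b3 b4 b5 b6)"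
  by (auto simp: connection_simps QLC_bits_simps gCIII_def)

theorem mainTheorem4:
  shows "{g. quantum_metric VA g} = {gAI, gAII}
    \<and> {g. quantum_metric VB g} = {gB}
    \<and> {g. quantum_metric VC g} = {gCI, gCII, gCIII}
    \<and> (\<forall>(V, g, L) \<in> cases4.
          (\<forall>nab s. QLC V g nab s \<and> const_coeff nab \<longrightarrow> (nab (dxb E), nab (dxb X)) \<in> L)
        \<and> (\<forall>(nE, nX) \<in> L. \<exists>nab s. QLC V g nab s \<and> const_coeff nab
              \<and> nab (dxb E) = nE \<and> nab (dxb X) = nX)
        \<and> (\<forall>nab s. QLC V g nab s \<and> const_coeff nab \<longrightarrow>
              (\<forall>w. nab w = sub2 (tens V (dxb E) w) (s (tens V w (dxb E))))))
    \<and> (\<forall>(V, g, L) \<in> cases4. \<forall>nab s. QLC V g nab s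
          \<and> nab (dxb E) = zero2 \<and> nab (dxb X) = zero2 \<longrightarrow>
          (\<forall>mu nu. s (basis2 mu nu) = basis2 nu mu))"
proof (intro conjI quantum_metrics_VA quantum_metrics_VB quantum_metrics_VC)
  show "\<forall>(V, g, L) \<in> cases4.
          (\<forall>nab s. QLC V g nab s \<and> const_coeff nab \<longrightarrow> (nab (dxb E), nab (dxb X)) \<in> L)
        \<and> (\<forall>(nE, nX) \<in> L. \<exists>nab s. QLC V g nab s \<and> const_coeff nab
              \<and> nab (dxb E) = nE \<and> nab (dxb X) = nX)
        \<and> (\<forall>nab s. QLC V g nab s \<and> const_coeff nab \<longrightarrow>
              (\<forall>w. nab w = sub2 (tens V (dxb E) w) (s (tens V w (dxb E)))))"
    using constant_QLCs_Valg[OF compatible_christoffels_gAI listed_QLCs_gAI]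
      constant_QLCs_Valg[OF compatible_christoffels_gAII listed_QLCs_gAII]
      constant_QLCs_Valg[OF compatible_christoffels_gB listed_QLCs_gB]
      constant_QLCs_Valg[OF compatible_christoffels_gCI listed_QLCs_gCI]
      constant_QLCs_Valg[OF compatible_christoffels_gCII listed_QLCs_gCII]
      constant_QLCs_Valg[OF compatible_christoffels_gCIII listed_QLCs_gCIII]
    by (simp add: cases4_def VA_def VB_def VC_def)
  show "\<forall>(V, g, L) \<in> cases4. \<forall>nab s. QLC V g nab s
          \<and> nab (dxb E) = zero2 \<and> nab (dxb X) = zero2 \<longrightarrow>
          (\<forall>mu nu. s (basis2 mu nu) = basis2 nu mu)"
    by (auto simp: cases4_def VA_def VB_def VC_def QLC_def intro: QLC_zero_connection_sigma_flip)
qed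

end
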